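(* Let $k$ be a field of characteristic $0$, $n\geq3$, and let $\phi$ be a quadratic form over $k$ in $n-1$ variables such that $\psi=\langle1\rangle\perp(-\phi)$ is a regular anisotropic form. Let $Q^\psi\subset\mathbb A^n_k$ be the hypersurface $x_1^2-\phi(x_2,\dots,x_n)-1=0$. Let $(R,m,\kappa)$ be a discrete valuation ring containing $k$, with fraction field $K$ and valuation $v$. Let $f\in Q^\psi(K)$ with $f_i=f^*(x_i)$, and suppose $\phi_\kappa$ is anisotropic. (1) If $f$ lifts to $Q^\psi({\rm Spec}\,R)$, then both $v(f_1-1)$ and $v(f_1+1)$ are even. (2) If $f$ does not lift to $Q^\psi({\rm Spec}\,R)$, then $v(f_1)<0$ and $v(f_1)=\min\{v(f_2),\dots,v(f_n)\}$.
   Context: $\phi_\kappa$ is the base change of $\phi$ to the residue field $\kappa$; $\langle1\rangle$ is the form $x^2$ and $\perp$ the orthogonal sum. *)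

theory Defs
  imports Main
begin

text \<open>Vectors are functions nat => 'a, only the first m coordinates matter.\<close>

definition qf_eval :: "nat \<Rightarrow> (nat \<Rightarrow> nat \<Rightarrow> 'a::comm_ring_1) \<Rightarrow> (nat \<Rightarrow> 'a) \<Rightarrow> 'a" where
  "qf_eval m A x = (\<Sum>i<m. \<Sum>j<m. A i j * x i * x j)"

definition qf_polar :: "nat \<Rightarrow> (nat \<Rightarrow> nat \<Rightarrow> 'a::comm_ring_1) \<Rightarrow> (nat \<Rightarrow> 'a) \<Rightarrow> (nat \<Rightarrow> 'a) \<Rightarrow> 'a" where
  "qf_polar m A x y = qf_eval m A (\<lambda>i. x i + y i) - qf_eval m A x - qf_eval m A y"

definition qf_regular :: "nat \<Rightarrow> (nat \<Rightarrow> nat \<Rightarrow> 'a::comm_ring_1) \<Rightarrow> bool" where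
  "qf_regular m A \<longleftrightarrow>
     (\<forall>x. (\<forall>y. qf_polar m A x y = 0) \<longrightarrow> (\<forall>i<m. x i = 0))"

definition qf_anisotropic :: "nat \<Rightarrow> (nat \<Rightarrow> nat \<Rightarrow> 'a::comm_ring_1) \<Rightarrow> bool" where
  "qf_anisotropic m A \<longleftrightarrow> (\<forall>x. qf_eval m A x = 0 \<longrightarrow> (\<forall>i<m. x i = 0))"

definition qf_one :: "nat \<Rightarrow> nat \<Rightarrow> 'a::comm_ring_1" where
  "qf_one i j = (if i = 0 \<and> j = 0 then 1 else 0)"

definition qf_neg :: "(nat \<Rightarrow> nat \<Rightarrow> 'a::comm_ring_1) \<Rightarrow> nat \<Rightarrow> nat \<Rightarrow> 'a" where
  "qf_neg A i j = - A i j"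

definition qf_orth_sum :: "nat \<Rightarrow> (nat \<Rightarrow> nat \<Rightarrow> 'a::comm_ring_1) \<Rightarrow> (nat \<Rightarrow> nat \<Rightarrow> 'a) \<Rightarrow> nat \<Rightarrow> nat \<Rightarrow> 'a" where
  "qf_orth_sum m1 A B i j =
     (if i < m1 \<and> j < m1 then A i j
      else if m1 \<le> i \<and> m1 \<le> j then B (i - m1) (j - m1) else 0)"

definition qf_map :: "('a \<Rightarrow> 'b) \<Rightarrow> (nat \<Rightarrow> nat \<Rightarrow> 'a) \<Rightarrow> nat \<Rightarrow> nat \<Rightarrow> 'b" where
  "qf_map h A i j = h (A i j)"

definition ring_hom_fun :: "('a::comm_ring_1 \<Rightarrow> 'b::comm_ring_1) \<Rightarrow> bool" where
  "ring_hom_fun h \<longleftrightarrow> h 1 = 1 \<and> (\<forall>a b. h (a + b) = h a + h b) \<and> (\<forall>a b. h (a * b) = h a * h b)"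

text \<open>A normalized discrete valuation on the field K, given by its values on nonzero
  elements (v 0 = infinity is not represented; v is only consulted on nonzero elements).
  The associated DVR is R = {0} \<union> {x. v x \<ge> 0}, with maximal ideal m = {0} \<union> {x. v x > 0},
  and K is its fraction field.\<close>
definition discrete_valuation :: "('K::field \<Rightarrow> int) \<Rightarrow> bool" where
  "discrete_valuation v \<longleftrightarrow>
     (\<forall>x y. x \<noteq> 0 \<longrightarrow> y \<noteq> 0 \<longrightarrow> v (x * y) = v x + v y) \<and>
     (\<forall>x y. x \<noteq> 0 \<longrightarrow> y \<noteq> 0 \<longrightarrow> x + y \<noteq> 0 \<longrightarrow> v (x + y) \<ge> min (v x) (v y)) \<and>
     (\<exists>p. p \<noteq> 0 \<and> v p = 1)"

definition val_ring :: "('K::field \<Rightarrow> int) \<Rightarrow> 'K set" where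
  "val_ring v = {x. x = 0 \<or> v x \<ge> 0}"

definition val_ideal :: "('K::field \<Rightarrow> int) \<Rightarrow> 'K set" where
  "val_ideal v = {x. x = 0 \<or> v x > 0}"

text \<open>phi_kappa anisotropic, where kappa = R/m: a vector with coordinates in R on which
  phi takes a value in m reduces to the zero vector mod m.\<close>
definition residue_anisotropic :: "('K::field \<Rightarrow> int) \<Rightarrow> nat \<Rightarrow> (nat \<Rightarrow> nat \<Rightarrow> 'K) \<Rightarrow> bool" where
  "residue_anisotropic v m A \<longleftrightarrow>
     (\<forall>y. (\<forall>i<m. y i \<in> val_ring v) \<longrightarrow> qf_eval m A y \<in> val_ideal v \<longrightarrow>
          (\<forall>i<m. y i \<in> val_ideal v))"

text \<open>Coordinates x_1..x_n are stored at indices 0..n-1; phi has n-1 variables.\<close>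
definition on_quadric :: "nat \<Rightarrow> (nat \<Rightarrow> nat \<Rightarrow> 'K::comm_ring_1) \<Rightarrow> (nat \<Rightarrow> 'K) \<Rightarrow> bool" where
  "on_quadric n A f \<longleftrightarrow> (f 0)^2 - qf_eval (n - 1) A (\<lambda>i. f (i + 1)) - 1 = 0"

text \<open>A K-point of the affine scheme Q^psi extends to an R-point iff all its coordinates lie in R.\<close>
definition lifts_to_R :: "('K::field \<Rightarrow> int) \<Rightarrow> nat \<Rightarrow> (nat \<Rightarrow> 'K) \<Rightarrow> bool" where
  "lifts_to_R v n f \<longleftrightarrow> (\<forall>i<n. f i \<in> val_ring v)"

end

theory Submission
  imports Defs
begin

text \<open>Write g = (f_2, ..., f_n) and a = f_1, so that a^2 - 1 = \<phi>(g).
  Scaling g by its coordinate of least valuation gives a primitive integral vector, on which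
  \<phi> takes a unit value because \<phi>_\<kappa> is anisotropic; hence
  v(\<phi>(g)) = 2 min v(g_i). In particular \<phi>(g) has even valuation, and it is
  integral only if g is. If a is integral, the factors a - 1 and a + 1 of \<phi>(g) differ by
  the unit 2, so one of them is a unit and the other has the even valuation of \<phi>(g).
  If a is not integral, v(a^2 - 1) = 2 v(a), whence v(a) = min v(g_i).\<close>

lemma ring_hom_fun_nonzero:
  fixes h :: "'a::field \<Rightarrow> 'b::field"
  assumes "ring_hom_fun h" "c \<noteq> 0"
  shows "h c \<noteq> 0"
proof
  assume "h c = 0"
  then have "h (c * inverse c) = 0"
    using assms(1) unfolding ring_hom_fun_def by simp
  then show False
    using assms unfolding ring_hom_fun_def by simp
qed

lemma qf_eval_scale: "qf_eval m B (\<lambda>i. c * y i) = c\<^sup>2 * qf_eval m B y"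
  by (simp add: qf_eval_def sum_distrib_left power2_eq_square mult_ac)

lemma qf_eval_zero_vector: "(\<And>i. i < m \<Longrightarrow> y i = 0) \<Longrightarrow> qf_eval m B y = 0"
  by (simp add: qf_eval_def)

locale valued_field =
  fixes v :: "'K::field \<Rightarrow> int"
  assumes discrete: "discrete_valuation v"
begin

lemma val_mult: "x \<noteq> 0 \<Longrightarrow> y \<noteq> 0 \<Longrightarrow> v (x * y) = v x + v y"
  using discrete unfolding discrete_valuation_def by blast

lemma val_add_ge_min: "x \<noteq> 0 \<Longrightarrow> y \<noteq> 0 \<Longrightarrow> x + y \<noteq> 0 \<Longrightarrow> min (v x) (v y) \<le> v (x + y)"
  using discrete unfolding discrete_valuation_def by blast

lemma val_one [simp]: "v 1 = 0"
  using val_mult[of 1 1] by simp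

lemma val_inverse: "x \<noteq> 0 \<Longrightarrow> v (inverse x) = - v x"
  using val_mult[of x "inverse x"] by simp

lemma val_minus_one [simp]: "v (-1) = 0"
  using val_mult[of "-1" "-1"] by simp

lemma val_uminus [simp]: "v (- x) = v x"
  using val_mult[of "-1" x] by (cases "x = 0") simp_all

lemma val_power2: "x \<noteq> 0 \<Longrightarrow> v (x\<^sup>2) = 2 * v x"
  using val_mult[of x x] by (simp add: power2_eq_square)

lemma val_add_eq_left:
  assumes "x \<noteq> 0" "y \<noteq> 0" "v x < v y"
  shows "x + y \<noteq> 0" "v (x + y) = v x"
proof -
  show sum_nz: "x + y \<noteq> 0"
    using assms by (metis add_eq_0_iff less_irrefl val_uminus)
  have "min (v (x + y)) (v (- y)) \<le> v (x + y + - y)"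
    using val_add_ge_min[of "x + y" "- y"] sum_nz assms by simp
  then show "v (x + y) = v x"
    using val_add_ge_min[of x y] sum_nz assms by simp
qed

lemma val_ring_add: "x \<in> val_ring v \<Longrightarrow> y \<in> val_ring v \<Longrightarrow> x + y \<in> val_ring v"
  unfolding val_ring_def using val_add_ge_min[of x y] by fastforce

lemma val_ring_mult: "x \<in> val_ring v \<Longrightarrow> y \<in> val_ring v \<Longrightarrow> x * y \<in> val_ring v"
  unfolding val_ring_def using val_mult[of x y] by fastforce

lemma val_ring_uminus: "x \<in> val_ring v \<Longrightarrow> - x \<in> val_ring v"
  by (simp add: val_ring_def)

lemma val_ring_one: "1 \<in> val_ring v"
  by (simp add: val_ring_def)

lemma val_ring_zero: "0 \<in> val_ring v"
  by (simp add: val_ring_def)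

lemma val_ring_sum: "(\<And>i. i \<in> I \<Longrightarrow> F i \<in> val_ring v) \<Longrightarrow> sum F I \<in> val_ring v"
  by (induction I rule: infinite_finite_induct) (simp_all add: val_ring_zero val_ring_add)

lemma val_ideal_diff: "x \<in> val_ideal v \<Longrightarrow> y \<in> val_ideal v \<Longrightarrow> x - y \<in> val_ideal v"
  unfolding val_ideal_def using val_add_ge_min[of x "- y"] by fastforce

lemma val_eq_0_if_unit: "x \<in> val_ring v \<Longrightarrow> x \<notin> val_ideal v \<Longrightarrow> v x = 0"
  by (auto simp: val_ring_def val_ideal_def)

lemma val_ring_hom_image:
  fixes h :: "'k::field \<Rightarrow> 'K"
  assumes "ring_hom_fun h" "\<forall>c. h c \<in> val_ring v" "c \<noteq> 0"
  shows "v (h c) = 0"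
proof -
  have nonzero: "h c \<noteq> 0" "h (inverse c) \<noteq> 0"
    using ring_hom_fun_nonzero[OF assms(1)] assms(3) by simp_all
  have "h c * h (inverse c) = 1"
    using assms(1,3) unfolding ring_hom_fun_def by (metis right_inverse)
  then have "v (h c) + v (h (inverse c)) = 0"
    using val_mult[OF nonzero] by simp
  moreover have "0 \<le> v (h c)" "0 \<le> v (h (inverse c))"
    using assms(2) nonzero unfolding val_ring_def by blast+
  ultimately show ?thesis by linarith
qed

lemma val_even_if_factors_differ_by_unit:
  assumes "x \<in> val_ring v" "y \<in> val_ring v" "x - y \<notin> val_ideal v"
    and "x \<noteq> 0" "y \<noteq> 0" "even (v (x * y))"
  shows "even (v x)" "even (v y)"
proof -
  have "v x = 0 \<or> v y = 0"
    using assms(1-3) val_eq_0_if_unit val_ideal_diff by blast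
  then show "even (v x)" "even (v y)"
    using assms(4-6) val_mult by auto
qed

lemma qf_eval_in_val_ring:
  assumes "\<And>i j. B i j \<in> val_ring v" "\<And>i. i < m \<Longrightarrow> y i \<in> val_ring v"
  shows "qf_eval m B y \<in> val_ring v"
  unfolding qf_eval_def using assms by (intro val_ring_sum val_ring_mult) auto

lemma residue_anisotropic_val_qf_eval:
  assumes coef: "\<And>i j. B i j \<in> val_ring v"
    and aniso: "residue_anisotropic v m B"
    and nonzero: "\<exists>i<m. g i \<noteq> 0"
  shows "qf_eval m B g \<noteq> 0" "v (qf_eval m B g) = 2 * Min {v (g i) | i. i < m \<and> g i \<noteq> 0}"
proof -
  let ?S = "{v (g i) | i. i < m \<and> g i \<noteq> 0}"
  have "finite ?S" "?S \<noteq> {}" using nonzero by auto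
  from Min_in[OF this] obtain j where j: "j < m" "g j \<noteq> 0" "v (g j) = Min ?S"
    by auto
  define c where "c = g j"
  define y where "y = (\<lambda>i. g i / c)"
  have c_nz: "c \<noteq> 0" using j by (simp add: c_def)
  have y_integral: "y i \<in> val_ring v" if "i < m" for i
  proof (cases "g i = 0")
    case False
    then have "v (g i) \<in> ?S" using that by auto
    then have "v c \<le> v (g i)"
      using j Min_le[OF \<open>finite ?S\<close>] by (simp add: c_def)
    moreover have "v (y i) = v (g i) - v c"
      using val_mult[of "g i" "inverse c"] val_inverse[of c] False c_nz
      by (simp add: y_def divide_inverse)
    ultimately show ?thesis by (simp add: val_ring_def)
  qed (simp add: y_def val_ring_def)
  have "y j \<notin> val_ideal v"
    using c_nz by (simp add: y_def c_def val_ideal_def)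
  then have "qf_eval m B y \<notin> val_ideal v"
    using aniso y_integral j(1) unfolding residue_anisotropic_def by blast
  moreover have "qf_eval m B y \<in> val_ring v"
    using coef y_integral by (rule qf_eval_in_val_ring)
  ultimately have y_unit: "qf_eval m B y \<noteq> 0" "v (qf_eval m B y) = 0"
    by (auto simp: val_ring_def val_ideal_def)
  have scaled: "qf_eval m B g = c\<^sup>2 * qf_eval m B y"
    using qf_eval_scale[of m B c y] c_nz by (simp add: y_def)
  show "qf_eval m B g \<noteq> 0"
    using scaled y_unit c_nz by simp
  show "v (qf_eval m B g) = 2 * Min ?S"
    using scaled y_unit c_nz val_mult[of "c\<^sup>2"] val_power2[of c] j by (simp add: c_def)
qed

lemma residue_anisotropic_even_val:
  assumes "\<And>i j. B i j \<in> val_ring v" "residue_anisotropic v m B" "qf_eval m B g \<noteq> 0"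
  shows "even (v (qf_eval m B g))"
proof -
  have "\<exists>i<m. g i \<noteq> 0"
    using assms(3) qf_eval_zero_vector by blast
  then show ?thesis
    by (simp add: residue_anisotropic_val_qf_eval(2)[OF assms(1,2)])
qed

lemma residue_anisotropic_integral:
  assumes coef: "\<And>i j. B i j \<in> val_ring v"
    and aniso: "residue_anisotropic v m B"
    and "qf_eval m B g \<in> val_ring v" "i < m"
  shows "g i \<in> val_ring v"
proof (cases "g i = 0")
  case False
  let ?S = "{v (g i) | i. i < m \<and> g i \<noteq> 0}"
  have "v (g i) \<in> ?S"
    using False \<open>i < m\<close> by auto
  have "\<exists>i<m. g i \<noteq> 0"
    using False \<open>i < m\<close> by blast
  from residue_anisotropic_val_qf_eval[OF coef aniso this] have "0 \<le> 2 * Min ?S"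
    using assms(3) by (simp add: val_ring_def)
  moreover have "Min ?S \<le> v (g i)"
    using \<open>v (g i) \<in> ?S\<close> by (simp add: Min_le)
  ultimately show ?thesis by (simp add: val_ring_def)
qed (simp add: val_ring_def)

lemma quadric_integral:
  assumes coef: "\<And>i j. B i j \<in> val_ring v"
    and aniso: "residue_anisotropic v m B"
    and "a \<in> val_ring v"
    and quadric: "a\<^sup>2 - 1 = qf_eval m B g"
    and "i < m"
  shows "g i \<in> val_ring v"
proof -
  have "qf_eval m B g \<in> val_ring v"
    unfolding quadric[symmetric] diff_conv_add_uminus power2_eq_square
    using \<open>a \<in> val_ring v\<close> by (intro val_ring_add val_ring_mult val_ring_uminus val_ring_one)
  then show ?thesis
    using residue_anisotropic_integral[OF coef aniso] \<open>i < m\<close> by blast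
qed

lemma quadric_even_val_diff_one:
  assumes coef: "\<And>i j. B i j \<in> val_ring v"
    and aniso: "residue_anisotropic v m B"
    and two_unit: "2 \<notin> val_ideal v"
    and a_integral: "a \<in> val_ring v"
    and quadric: "a\<^sup>2 - 1 = qf_eval m B g"
    and "a \<noteq> 1"
  shows "even (v (a - 1))"
proof (cases "a = -1")
  case True
  have "2 \<in> val_ring v"
    using val_ring_add[OF val_ring_one val_ring_one] by simp
  then show ?thesis
    using True two_unit val_eq_0_if_unit by simp
next
  case False
  then have "a + 1 \<noteq> 0" "a - 1 \<noteq> 0"
    using \<open>a \<noteq> 1\<close> by (auto simp: add_eq_0_iff minus_equation_iff)
  moreover have "(a + 1) * (a - 1) = qf_eval m B g"
    using quadric by (simp add: algebra_simps power2_eq_square)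
  ultimately have "even (v ((a + 1) * (a - 1)))"
    using residue_anisotropic_even_val[OF coef aniso] by (metis no_zero_divisors)
  moreover have "a + 1 \<in> val_ring v" "a - 1 \<in> val_ring v"
    using a_integral val_ring_one val_ring_add val_ring_uminus by (metis diff_conv_add_uminus)+
  ultimately show ?thesis
    using val_even_if_factors_differ_by_unit(2) two_unit \<open>a + 1 \<noteq> 0\<close> \<open>a - 1 \<noteq> 0\<close>
    by (simp add: algebra_simps)
qed

lemma quadric_even_val_add_one:
  assumes coef: "\<And>i j. B i j \<in> val_ring v"
    and aniso: "residue_anisotropic v m B"
    and two_unit: "2 \<notin> val_ideal v"
    and a_integral: "a \<in> val_ring v"
    and quadric: "a\<^sup>2 - 1 = qf_eval m B g"
    and "a \<noteq> -1"
  shows "even (v (a + 1))"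
proof -
  have "even (v (- a - 1))"
    using quadric_even_val_diff_one[OF coef aniso two_unit, of "- a" g] assms(4-6)
      val_ring_uminus by (auto simp: minus_equation_iff)
  moreover have "- a - 1 = - (a + 1)" by simp
  ultimately show ?thesis by (metis val_uminus)
qed

lemma quadric_nonintegral_val:
  assumes coef: "\<And>i j. B i j \<in> val_ring v"
    and aniso: "residue_anisotropic v m B"
    and quadric: "a\<^sup>2 - 1 = qf_eval m B g"
    and "a \<notin> val_ring v"
  shows "a \<noteq> 0" "v a < 0" "v a = Min {v (g i) | i. i < m \<and> g i \<noteq> 0}"
proof -
  show "a \<noteq> 0" and "v a < 0"
    using \<open>a \<notin> val_ring v\<close> by (auto simp: val_ring_def)
  then have "a\<^sup>2 + - 1 \<noteq> 0" "v (a\<^sup>2 + - 1) = 2 * v a"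
    using val_add_eq_left[of "a\<^sup>2" "- 1"] val_power2 by auto
  then have "qf_eval m B g \<noteq> 0" "v (qf_eval m B g) = 2 * v a"
    using quadric by simp_all
  moreover from this(1) have "\<exists>i<m. g i \<noteq> 0"
    using qf_eval_zero_vector by blast
  ultimately show "v a = Min {v (g i) | i. i < m \<and> g i \<noteq> 0}"
    using residue_anisotropic_val_qf_eval(2)[OF coef aniso] by simp
qed

end

theorem lemma4p11:
  fixes A :: "nat \<Rightarrow> nat \<Rightarrow> 'k::field_char_0"
    and h :: "'k \<Rightarrow> 'K::field"
    and v :: "'K \<Rightarrow> int"
    and n :: nat
    and f :: "nat \<Rightarrow> 'K"
  assumes n3: "n \<ge> 3"
    and psi_regular: "qf_regular n (qf_orth_sum 1 qf_one (qf_neg A))"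
    and psi_aniso: "qf_anisotropic n (qf_orth_sum 1 qf_one (qf_neg A))"
    and hom: "ring_hom_fun h"
    and dval: "discrete_valuation v"
    and k_in_R: "\<forall>c. h c \<in> val_ring v"
    and fQ: "on_quadric n (qf_map h A) f"
    and res_aniso: "residue_anisotropic v (n - 1) (qf_map h A)"
  shows "(lifts_to_R v n f \<longrightarrow>
            (f 0 \<noteq> 1 \<longrightarrow> even (v (f 0 - 1))) \<and> (f 0 \<noteq> -1 \<longrightarrow> even (v (f 0 + 1))))
       \<and> (\<not> lifts_to_R v n f \<longrightarrow>
            f 0 \<noteq> 0 \<and> v (f 0) < 0 \<and> v (f 0) = Min {v (f i) | i. 1 \<le> i \<and> i < n \<and> f i \<noteq> 0})"
proof -
  interpret valued_field v by (rule valued_field.intro) (fact dval)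
  obtain m where m: "n = Suc m" using n3 by (cases n) auto
  define g where "g = (\<lambda>i. f (i + 1))"
  have coef: "\<And>i j. qf_map h A i j \<in> val_ring v"
    using k_in_R by (simp add: qf_map_def)
  have aniso: "residue_anisotropic v m (qf_map h A)"
    using res_aniso by (simp add: m)
  have quadric: "f 0 ^ 2 - 1 = qf_eval m (qf_map h A) g"
    using fQ unfolding on_quadric_def g_def m by (simp add: algebra_simps)
  have "h 2 = 2"
    using hom unfolding ring_hom_fun_def by (metis one_add_one)
  moreover have "h 2 \<noteq> 0"
    using ring_hom_fun_nonzero[OF hom] by simp
  ultimately have two_unit: "2 \<notin> val_ideal v"
    using val_ring_hom_image[OF hom k_in_R, of 2] by (simp add: val_ideal_def)
  have lifts_iff: "lifts_to_R v n f \<longleftrightarrow> f 0 \<in> val_ring v \<and> (\<forall>i < m. g i \<in> val_ring v)"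
    by (simp add: lifts_to_R_def g_def m All_less_Suc2)
  have shift: "{v (g i) | i. i < m \<and> g i \<noteq> 0} = {v (f i) | i. 1 \<le> i \<and> i < n \<and> f i \<noteq> 0}"
    by (auto simp: g_def m) (metis Suc_le_D Suc_less_eq)
  have "even (v (f 0 - 1))" if "lifts_to_R v n f" "f 0 \<noteq> 1"
    using quadric_even_val_diff_one[OF coef aniso two_unit _ quadric] that lifts_iff by blast
  moreover have "even (v (f 0 + 1))" if "lifts_to_R v n f" "f 0 \<noteq> -1"
    using quadric_even_val_add_one[OF coef aniso two_unit _ quadric] that lifts_iff by blast
  moreover have "f 0 \<notin> val_ring v" if "\<not> lifts_to_R v n f"
    using quadric_integral[OF coef aniso _ quadric] that lifts_iff by blast
  ultimately show ?thesis
    unfolding shift[symmetric] using quadric_nonintegral_val[OF coef aniso quadric] by blast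
qed

end
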